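(* Let $K\subseteq[0,1]^n$ be compact and let $f:K\to[0,1]$ be continuous and polynomially bounded on $K$. Then there exist $\epsilon>0$ and an integer $t_0$ such that for every integer $t\ge t_0$, $$f(p)-\frac14\,\mathbb{P}_p\!\left[f(Z_{t,\epsilon})\ge\tfrac12\right]\ \ge\ \frac18 f(p)\qquad\text{for all } p\in K.$$
   Context: For $p\in[0,1]^n$, let $X_1,X_2,\dots$ be i.i.d. random vectors in $\{0,1\}^n$ with independent Bernoulli($p_i$) coordinates, $\bar X_t=(X_1+\dots+X_t)/t$; $\mathbb{P}_p$ denotes probability under this law. $\mathcal{B}_\infty(K,\epsilon)=\{x\in\mathbb{R}^n:\exists q\in K,\ \|x-q\|_\infty<\epsilon\}$. $Y_{t,\epsilon}$ has the conditional law of $\bar X_t$ given $\bar X_t\in\mathcal{B}_\infty(K,\epsilon)$ (obtained by resampling $\bar X_t$ until it lies in $\mathcal{B}_\infty(K,\epsilon)$). $\Pi_K:[0,1]^n\to K$ is a fixed (arbitrarily chosen, not necessarily continuous) map with $\|\Pi_K(x)-x\|_\infty\le\|q-x\|_\infty$ for all $x\in[0,1]^n$, $q\in K$, and $Z_{t,\epsilon}=\Pi_K(Y_{t,\epsilon})$. For a partition $[n]=A\sqcup S\sqcup B$, the open face is $F_{A,S,B}=\{p\in[0,1]^n: p_i=0\ (i\in A),\ 0<p_i<1\ (i\in S),\ p_i=1\ (i\in B)\}$. For $T\subseteq[n]$, $p^T=\prod_{i\in T}p_i$, $(1-p)^T=\prod_{i\in T}(1-p_i)$. $f:K\to[0,1]$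 is polynomially bounded on $K$ if there exist an integer $m\ge0$ and a real $c>0$ such that for every open face $F_{A,S,B}$: if some $q\in K\cap F_{A,S,B}$ has $f(q)>0$, then $f(p)\ge c\left((1-p)^A p^S(1-p)^S p^B\right)^m$ for all $p\in K$. *)

theory Defs
  imports "HOL-Analysis.Analysis" "HOL-Probability.Probability"
begin

text \<open>Points of [0,1]^n are functions from a finite index type 'n (with n = CARD('n)).\<close>

definition unit_cube :: "('n::finite \<Rightarrow> real) set" where
  "unit_cube = {p. \<forall>i. 0 \<le> p i \<and> p i \<le> 1}"

definition linf_dist :: "('n::finite \<Rightarrow> real) \<Rightarrow> ('n \<Rightarrow> real) \<Rightarrow> real" where
  "linf_dist x q = Max (range (\<lambda>i. \<bar>x i - q i\<bar>))"

definition linf_nbhd :: "('n::finite \<Rightarrow> real) set \<Rightarrow> real \<Rightarrow> ('n \<Rightarrow> real) set" where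
  "linf_nbhd K \<epsilon> = {x. \<exists>q\<in>K. linf_dist x q < \<epsilon>}"

definition open_face :: "'n::finite set \<Rightarrow> 'n set \<Rightarrow> 'n set \<Rightarrow> ('n \<Rightarrow> real) set" where
  "open_face A S B = {p \<in> unit_cube. (\<forall>i\<in>A. p i = 0) \<and> (\<forall>i\<in>S. 0 < p i \<and> p i < 1) \<and> (\<forall>i\<in>B. p i = 1)}"

definition is_partition3 :: "'n set \<Rightarrow> 'n set \<Rightarrow> 'n set \<Rightarrow> bool" where
  "is_partition3 A S B \<longleftrightarrow> A \<union> S \<union> B = UNIV \<and> A \<inter> S = {} \<and> A \<inter> B = {} \<and> S \<inter> B = {}"

definition poly_bounded :: "('n::finite \<Rightarrow> real) set \<Rightarrow> (('n \<Rightarrow> real) \<Rightarrow> real) \<Rightarrow> bool" where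
  "poly_bounded K f \<longleftrightarrow> (\<exists>m::nat. \<exists>c::real. c > 0 \<and>
     (\<forall>A S B. is_partition3 A S B \<longrightarrow> (\<exists>q \<in> K \<inter> open_face A S B. f q > 0) \<longrightarrow>
        (\<forall>p\<in>K. f p \<ge> c * ((\<Prod>i\<in>A. 1 - p i) * (\<Prod>i\<in>S. p i) * (\<Prod>i\<in>S. 1 - p i) * (\<Prod>i\<in>B. p i)) ^ m)))"

text \<open>Law of the empirical mean of t i.i.d. vectors with independent Bernoulli(p_i) coordinates:
  coordinates are independent Binomial(t,p_i)/t.\<close>
definition Xbar_pmf :: "nat \<Rightarrow> ('n::finite \<Rightarrow> real) \<Rightarrow> ('n \<Rightarrow> real) pmf" where
  "Xbar_pmf t p = Pi_pmf UNIV 0 (\<lambda>i. map_pmf (\<lambda>k. real k / real t) (binomial_pmf t (p i)))"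

definition Y_pmf :: "nat \<Rightarrow> real \<Rightarrow> ('n::finite \<Rightarrow> real) set \<Rightarrow> ('n \<Rightarrow> real) \<Rightarrow> ('n \<Rightarrow> real) pmf" where
  "Y_pmf t \<epsilon> K p = cond_pmf (Xbar_pmf t p) (linf_nbhd K \<epsilon>)"

end

(*
  Let X = Xbar_t, N = B_inf(K, eps) and E = {y. f (Pi_K y) >= 1/2}. By Hoeffding's inequality in
  each coordinate, P[|X - p|_inf >= eps] tends to 0 uniformly in p; as p is in K this bounds
  P[X not in N], so conditioning on N at most doubles probabilities and it suffices to show
  P[X in N and E] <= f p / 2 when f p <= 2/7.

  By compactness {f >= 1/2} and {f <= 2/7} are at positive sup-distance delta in K, and Pi_K X is
  within eps of X. If f p is not tiny, the event therefore forces |X - p|_inf >= delta/2, which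
  has exponentially small probability.

  If f p is tiny, classify every coordinate of X as Low (below 1/R), High (above 1 - 1/R) or Mid.
  Rounding X to the face of the cube given by this pattern moves it by less than 1/R, and
  {f >= 1/2} is at positive distance from the faces on which f vanishes; so the face contains a
  point of K where f > 0, and polynomial boundedness gives f p >= c * (prod_i w_i(p))^m with w_i
  equal to 1 - p_i, p_i or p_i (1 - p_i) according to the zone. As f p is tiny, some w_j(p) is
  below 4^-R / 2, i.e. p_j lies far on the wrong side of the zone of coordinate j, and a binomial
  tail bound makes that zone cost 2^m 4^(R m) 2^-t w_j(p)^m. Summing over the 3^n patterns gives
  P[X in N and E] = O(2^-t) f p.
*)

theory Submission
  imports Defs
begin

section \<open>Sup-distance and compactness\<close>

lemma abs_le_linf_dist: "\<bar>x i - q i\<bar> \<le> linf_dist x q"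
  unfolding linf_dist_def by (rule Max_ge) auto

lemma linf_dist_le_iff: "linf_dist x q \<le> a \<longleftrightarrow> (\<forall>i. \<bar>x i - q i\<bar> \<le> a)"
  unfolding linf_dist_def by (subst Max_le_iff) auto

lemma linf_dist_less_iff: "linf_dist x q < a \<longleftrightarrow> (\<forall>i. \<bar>x i - q i\<bar> < a)"
  unfolding linf_dist_def by (subst Max_less_iff) auto

lemma linf_dist_commute: "linf_dist x q = linf_dist q x"
  unfolding linf_dist_def by (simp add: abs_minus_commute)

lemma linf_dist_triangle: "linf_dist x z \<le> linf_dist x y + linf_dist y z"
proof -
  have "\<bar>x i - z i\<bar> \<le> linf_dist x y + linf_dist y z" for i
    using abs_le_linf_dist[of x i y] abs_le_linf_dist[of y i z] by linarith
  then show ?thesis by (simp add: linf_dist_le_iff)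
qed

(* dist on 'n \<Rightarrow> real is the weighted-sum metric of Function_Metric, not the sup-distance. *)
lemma dist_le_linf_dist:
  fixes x y :: "'n::finite \<Rightarrow> real"
  shows "dist x y \<le> 2 * linf_dist x y"
proof (rule field_le_epsilon)
  fix e :: real
  assume "0 < e"
  then obtain N where N: "(1/2) ^ N < e"
    using real_arch_pow_inv[of e "1/2"] by auto
  have "Max {dist (x (from_nat n)) (y (from_nat n)) |n. n \<le> N} \<le> linf_dist x y"
    using abs_le_linf_dist[of x _ y] by (subst Max_le_iff) (auto simp: dist_real_def)
  then show "dist x y \<le> 2 * linf_dist x y + e"
    using dist_fun_le_dist_first_terms[of x y N] N by linarith
qed

lemma separate_compact_closed_linf:
  fixes S T :: "('n::finite \<Rightarrow> real) set"
  assumes "compact S" "closed T" "S \<inter> T = {}"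
  obtains d where "0 < d" "\<And>x y. x \<in> S \<Longrightarrow> y \<in> T \<Longrightarrow> d \<le> linf_dist x y"
proof (cases "S = {} \<or> T = {}")
  case True
  then show thesis using that[of 1] by auto
next
  case False
  have "continuous_on S (\<lambda>x. infdist x T)"
    by (intro continuous_intros)
  then obtain x0 where "x0 \<in> S" and x0_min: "\<And>x. x \<in> S \<Longrightarrow> infdist x0 T \<le> infdist x T"
    using continuous_attains_inf[OF assms(1)] False by blast
  have "0 < infdist x0 T"
    using in_closed_iff_infdist_zero[OF assms(2)] infdist_nonneg[of x0 T] \<open>x0 \<in> S\<close> False assms(3)
    by force
  moreover have "infdist x0 T / 2 \<le> linf_dist x y" if "x \<in> S" "y \<in> T" for x y
    using x0_min[OF that(1)] infdist_le[OF that(2), of x] dist_le_linf_dist[of x y] by linarith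
  ultimately show thesis using that[of "infdist x0 T / 2"] by simp
qed

lemma compact_superlevel:
  fixes f :: "'a::metric_space \<Rightarrow> real"
  assumes "compact K" "continuous_on K f"
  shows "compact {z \<in> K. a \<le> f z}"
proof -
  have "closed (K \<inter> f -` {a..})"
    using assms(2) compact_imp_closed[OF assms(1)] closed_atLeast by (rule continuous_closed_preimage)
  then have "compact (K \<inter> (K \<inter> f -` {a..}))"
    using assms(1) by (intro compact_Int_closed)
  moreover have "K \<inter> (K \<inter> f -` {a..}) = {z \<in> K. a \<le> f z}" by auto
  ultimately show ?thesis by simp
qed

lemma closed_sublevel:
  fixes f :: "'a::metric_space \<Rightarrow> real"
  assumes "compact K" "continuous_on K f"
  shows "closed {p \<in> K. f p \<le> b}"
proof -
  have "closed (K \<inter> f -` {..b})"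
    using assms(2) compact_imp_closed[OF assms(1)] closed_atMost by (rule continuous_closed_preimage)
  moreover have "K \<inter> f -` {..b} = {p \<in> K. f p \<le> b}" by auto
  ultimately show ?thesis by simp
qed

lemma exists_level_gap:
  fixes K :: "('n::finite \<Rightarrow> real) set" and f :: "('n \<Rightarrow> real) \<Rightarrow> real"
  assumes "compact K" "continuous_on K f" "b < a"
  obtains \<delta> where "0 < \<delta>"
    "\<And>z p. z \<in> K \<Longrightarrow> a \<le> f z \<Longrightarrow> p \<in> K \<Longrightarrow> f p \<le> b \<Longrightarrow> \<delta> \<le> linf_dist z p"
proof -
  have "{z \<in> K. a \<le> f z} \<inter> {p \<in> K. f p \<le> b} = {}" using assms(3) by auto
  then obtain \<delta> where "0 < \<delta>"
    and gap: "\<And>z p. z \<in> {z \<in> K. a \<le> f z} \<Longrightarrow> p \<in> {p \<in> K. f p \<le> b} \<Longrightarrow> \<delta> \<le> linf_dist z p"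
    by (rule separate_compact_closed_linf[OF compact_superlevel[OF assms(1,2)] closed_sublevel[OF assms(1,2)]]) blast
  show thesis
    by (rule that[OF \<open>0 < \<delta>\<close>]) (simp add: gap)
qed

section \<open>Zone patterns and faces of the cube\<close>

(*
  A pattern \<sigma> :: 'n \<Rightarrow> zone names the closed face zone_face \<sigma> of the cube, on which the Low
  coordinates are 0 and the High ones are 1. zone_weight is the factor that the polynomial in
  poly_bounded attaches to a coordinate that is 0 (Low), interior (Mid) or 1 (High), and
  face_zone reads off this classification for a point of the cube.
*)
datatype zone = Low | Mid | High

instance zone :: finite
proof
  have "(UNIV :: zone set) = {Low, Mid, High}" using zone.exhaust by blast
  then show "finite (UNIV :: zone set)" by (metis finite.emptyI finite_insert)
qed

definition zone_of :: "real \<Rightarrow> real \<Rightarrow> zone" where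
  "zone_of \<gamma> y = (if y < \<gamma> then Low else if 1 - \<gamma> < y then High else Mid)"

definition zone_face :: "('n \<Rightarrow> zone) \<Rightarrow> ('n \<Rightarrow> real) set" where
  "zone_face \<sigma> = {x. \<forall>i. (\<sigma> i = Low \<longrightarrow> x i = 0) \<and> (\<sigma> i = High \<longrightarrow> x i = 1)}"

definition zone_weight :: "zone \<Rightarrow> real \<Rightarrow> real" where
  "zone_weight z y = (case z of Low \<Rightarrow> 1 - y | Mid \<Rightarrow> y * (1 - y) | High \<Rightarrow> y)"

definition face_zone :: "real \<Rightarrow> zone" where
  "face_zone y = (if y = 0 then Low else if y = 1 then High else Mid)"

lemma closed_zone_face: "closed (zone_face (\<sigma> :: 'n::finite \<Rightarrow> zone))"
  unfolding zone_face_def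
  by (intro closed_Collect_all closed_Collect_conj closed_Collect_imp closed_Collect_eq
      continuous_on_component continuous_on_const) auto

lemma exists_zone_face_near:
  assumes "x \<in> unit_cube" "0 < \<gamma>"
  obtains y where "y \<in> zone_face (\<lambda>i. zone_of \<gamma> (x i))" "linf_dist x y < \<gamma>"
proof
  let ?y = "\<lambda>i. case zone_of \<gamma> (x i) of Low \<Rightarrow> 0 | Mid \<Rightarrow> x i | High \<Rightarrow> 1"
  show "?y \<in> zone_face (\<lambda>i. zone_of \<gamma> (x i))"
    by (auto simp: zone_face_def)
  show "linf_dist x ?y < \<gamma>"
    using assms by (auto simp: linf_dist_less_iff unit_cube_def zone_of_def)
qed

lemma zone_weight_nonneg: "0 \<le> y \<Longrightarrow> y \<le> 1 \<Longrightarrow> 0 \<le> zone_weight z y"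
  by (cases z) (auto simp: zone_weight_def)

lemma zone_weight_Mid_le: "0 \<le> y \<Longrightarrow> y \<le> 1 \<Longrightarrow> zone_weight Mid y \<le> zone_weight z y"
  by (cases z) (auto simp: zone_weight_def mult_left_le_one_le mult_right_le_one_le)

lemma prod_partition3:
  fixes g :: "'n::finite \<Rightarrow> 'a::comm_monoid_mult"
  assumes "is_partition3 A S B"
  shows "(\<Prod>i\<in>UNIV. g i) = (\<Prod>i\<in>A. g i) * (\<Prod>i\<in>S. g i) * (\<Prod>i\<in>B. g i)"
proof -
  have "(UNIV :: 'n set) = (A \<union> S) \<union> B" "(A \<union> S) \<inter> B = {}" "A \<inter> S = {}"
    using assms by (auto simp: is_partition3_def)
  then show ?thesis by (metis finite prod.union_disjoint)
qed

lemma prod_open_face_eq_prod_face_zone: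
  fixes p q :: "'n::finite \<Rightarrow> real"
  defines "A \<equiv> {i. q i = 0}" and "S \<equiv> {i. q i \<noteq> 0 \<and> q i \<noteq> 1}" and "B \<equiv> {i. q i = 1}"
  shows "(\<Prod>i\<in>A. 1 - p i) * (\<Prod>i\<in>S. p i) * (\<Prod>i\<in>S. 1 - p i) * (\<Prod>i\<in>B. p i)
           = (\<Prod>i\<in>UNIV. zone_weight (face_zone (q i)) (p i))"
proof -
  have part: "is_partition3 A S B"
    by (auto simp: is_partition3_def A_def S_def B_def)
  have "(\<Prod>i\<in>UNIV. zone_weight (face_zone (q i)) (p i))
      = (\<Prod>i\<in>A. 1 - p i) * ((\<Prod>i\<in>S. p i) * (\<Prod>i\<in>S. 1 - p i)) * (\<Prod>i\<in>B. p i)"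
    unfolding prod_partition3[OF part] prod.distrib[symmetric]
    by (intro arg_cong2[where f = times] prod.cong)
      (auto simp: A_def S_def B_def zone_weight_def face_zone_def)
  then show ?thesis
    by (simp add: mult.assoc)
qed

lemma prod_zone_weight_le_face_zone:
  assumes "q \<in> zone_face \<sigma>" "p \<in> unit_cube"
  shows "(\<Prod>i\<in>UNIV. zone_weight (\<sigma> i) (p i)) \<le> (\<Prod>i\<in>UNIV. zone_weight (face_zone (q i)) (p i))"
proof -
  have "\<sigma> i = Mid \<or> \<sigma> i = face_zone (q i)" for i
    using assms(1) by (cases "\<sigma> i") (auto simp: zone_face_def face_zone_def)
  moreover have "0 \<le> p i" "p i \<le> 1" for i
    using assms(2) by (auto simp: unit_cube_def)
  ultimately show ?thesis
    using zone_weight_Mid_le zone_weight_nonneg by (intro prod_mono) (metis order_refl)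
qed

lemma poly_bounded_zone_weight:
  fixes K :: "('n::finite \<Rightarrow> real) set"
  assumes "poly_bounded K f" "K \<subseteq> unit_cube"
  obtains c m where "0 < c"
    "\<And>\<sigma> p. \<exists>q\<in>K \<inter> zone_face \<sigma>. 0 < f q \<Longrightarrow> p \<in> K \<Longrightarrow>
       c * (\<Prod>i\<in>UNIV. zone_weight (\<sigma> i) (p i)) ^ m \<le> f p"
proof -
  obtain m c where "0 < c" and bound: "\<And>A S B p. is_partition3 A S B \<Longrightarrow>
      \<exists>q\<in>K \<inter> open_face A S B. 0 < f q \<Longrightarrow> p \<in> K \<Longrightarrow>
      c * ((\<Prod>i\<in>A. 1 - p i) * (\<Prod>i\<in>S. p i) * (\<Prod>i\<in>S. 1 - p i) * (\<Prod>i\<in>B. p i)) ^ m \<le> f p"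
    using assms(1) unfolding poly_bounded_def by blast
  have "c * (\<Prod>i\<in>UNIV. zone_weight (\<sigma> i) (p i)) ^ m \<le> f p"
    if "q \<in> K" "q \<in> zone_face \<sigma>" "0 < f q" "p \<in> K" for \<sigma> p q
  proof -
    let ?A = "{i. q i = 0}" and ?S = "{i. q i \<noteq> 0 \<and> q i \<noteq> 1}" and ?B = "{i. q i = 1}"
    have "is_partition3 ?A ?S ?B"
      by (auto simp: is_partition3_def)
    moreover have "q \<in> open_face ?A ?S ?B"
      using that(1) assms(2) by (auto simp: open_face_def unit_cube_def less_le)
    ultimately have "c * (\<Prod>i\<in>UNIV. zone_weight (face_zone (q i)) (p i)) ^ m \<le> f p"
      using bound[of ?A ?S ?B p] that(1,3,4) prod_open_face_eq_prod_face_zone[of p q] by auto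
    moreover have "p \<in> unit_cube"
      using that(4) assms(2) by blast
    then have "0 \<le> (\<Prod>i\<in>UNIV. zone_weight (\<sigma> i) (p i))"
      "(\<Prod>i\<in>UNIV. zone_weight (\<sigma> i) (p i)) \<le> (\<Prod>i\<in>UNIV. zone_weight (face_zone (q i)) (p i))"
      using prod_zone_weight_le_face_zone[OF that(2)] zone_weight_nonneg
      by (auto simp: unit_cube_def intro: prod_nonneg)
    ultimately show ?thesis
      using \<open>0 < c\<close> by (smt (verit) mult_left_mono power_mono)
  qed
  then show thesis
    using that \<open>0 < c\<close> by blast
qed

lemma exists_gap_to_null_faces:
  fixes K :: "('n::finite \<Rightarrow> real) set" and f :: "('n \<Rightarrow> real) \<Rightarrow> real"
  assumes "compact K" "continuous_on K f" "0 < a"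
  obtains e where "0 < e"
    "\<And>\<sigma> z y. \<forall>q\<in>K \<inter> zone_face \<sigma>. f q \<le> 0 \<Longrightarrow> z \<in> K \<Longrightarrow> a \<le> f z \<Longrightarrow> y \<in> zone_face \<sigma>
       \<Longrightarrow> e \<le> linf_dist z y"
proof -
  define Z where "Z = (\<Union>\<sigma>\<in>{\<sigma>. \<forall>q\<in>K \<inter> zone_face \<sigma>. f q \<le> 0}. zone_face \<sigma>)"
  have "closed Z"
    unfolding Z_def by (intro closed_UN ballI closed_zone_face) auto
  moreover have "f z \<le> 0" if "z \<in> K" "z \<in> Z" for z
    using that by (auto simp: Z_def)
  then have "{z \<in> K. a \<le> f z} \<inter> Z = {}"
    using assms(3) by fastforce
  ultimately obtain e where "0 < e" and gap: "\<And>z y. z \<in> {z \<in> K. a \<le> f z} \<Longrightarrow> y \<in> Z \<Longrightarrow> e \<le> linf_dist z y"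
    using separate_compact_closed_linf[OF compact_superlevel[OF assms(1,2)]] by blast
  show thesis
    by (rule that[OF \<open>0 < e\<close>]) (rule gap; auto simp: Z_def)
qed

section \<open>Binomial tails\<close>

lemma prob_binomial_le:
  fixes p b :: real
  assumes "0 \<le> p" "p \<le> 1" "0 \<le> b"
    and term_le: "\<And>k. k \<in> A \<Longrightarrow> k \<le> t \<Longrightarrow> p ^ k * (1 - p) ^ (t - k) \<le> b"
  shows "measure_pmf.prob (binomial_pmf t p) A \<le> 2 ^ t * b"
proof -
  have "set_pmf (binomial_pmf t p) \<subseteq> {..t}"
    using assms(1,2) by (auto simp: set_pmf_binomial_eq)
  then have "measure_pmf.prob (binomial_pmf t p) A = measure_pmf.prob (binomial_pmf t p) (A \<inter> {..t})"
    by (metis (no_types) inf.absorb_iff2 inf_assoc inf_commute measure_Int_set_pmf)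
  also have "\<dots> = (\<Sum>k\<in>A \<inter> {..t}. real (t choose k) * (p ^ k * (1 - p) ^ (t - k)))"
    using assms(1,2) by (simp add: measure_measure_pmf_finite pmf_binomial mult.assoc)
  also have "\<dots> \<le> (\<Sum>k\<in>A \<inter> {..t}. real (t choose k) * b)"
    using term_le by (intro sum_mono mult_left_mono) auto
  also have "\<dots> \<le> (\<Sum>k\<le>t. real (t choose k) * b)"
    using assms(3) by (intro sum_mono2) auto
  also have "\<dots> = 2 ^ t * b"
    by (simp add: sum_distrib_right[symmetric] flip: of_nat_sum) (simp add: choose_row_sum)
  finally show ?thesis .
qed

lemma binomial_term_le_tail:
  fixes p :: real
  assumes "0 \<le> p" "p \<le> (1/4) ^ R" "0 < R" "R * m \<le> t" "t \<le> R * k" "k \<le> t"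
  shows "p ^ k * (1 - p) ^ (t - k) \<le> 4 ^ (R * m) / 4 ^ t * p ^ m"
proof -
  have "(1/4 :: real) ^ R \<le> 1" by (simp add: power_le_one)
  then have "0 \<le> 1 - p" using assms(2) by linarith
  have "m \<le> k" using assms(3-5) by (metis le_trans mult_le_cancel1)
  have "(4 :: real) ^ t \<le> 4 ^ (R * m) * 4 ^ (R * (k - m))"
    using assms(5) \<open>m \<le> k\<close> by (simp flip: power_add add: add_mult_distrib2[symmetric])
  then have scale: "((1/4) ^ R) ^ (k - m) \<le> 4 ^ (R * m) / (4 :: real) ^ t"
    by (simp add: field_simps power_mult_distrib power_mult flip: power_mult_distrib)
  have "p ^ k * (1 - p) ^ (t - k) \<le> p ^ k"
    using assms(1) \<open>0 \<le> 1 - p\<close> \<open>p \<le> (1/4) ^ R\<close> \<open>(1/4) ^ R \<le> 1\<close>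
    by (intro mult_left_le mult_nonneg_nonneg power_le_one) auto
  also have "\<dots> = p ^ (k - m) * p ^ m"
    using \<open>m \<le> k\<close> by (simp flip: power_add)
  also have "\<dots> \<le> ((1/4) ^ R) ^ (k - m) * p ^ m"
    using assms(1,2) by (intro mult_right_mono power_mono) auto
  also have "\<dots> \<le> 4 ^ (R * m) / 4 ^ t * p ^ m"
    using scale assms(1) by (intro mult_right_mono) auto
  finally show ?thesis .
qed

lemma zone_of_fraction_bounds:
  assumes "2 \<le> R" "0 < t" "k \<le> t"
  shows "zone_of (1 / real R) (real k / real t) \<noteq> Low \<Longrightarrow> t \<le> R * k"
    and "zone_of (1 / real R) (real k / real t) \<noteq> High \<Longrightarrow> t \<le> R * (t - k)"
proof -
  have R: "2 \<le> real R" and t: "0 < real t" using assms by auto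
  show "t \<le> R * k" if "zone_of (1 / real R) (real k / real t) \<noteq> Low"
  proof -
    have "real t \<le> real R * real k"
      using that R t by (auto simp: zone_of_def field_simps split: if_splits)
    then show ?thesis by (simp flip: of_nat_mult)
  qed
  show "t \<le> R * (t - k)" if "zone_of (1 / real R) (real k / real t) \<noteq> High"
  proof -
    have "real k / real t \<le> 1 - 1 / real R"
      using that R by (auto simp: zone_of_def field_simps split: if_splits)
    then have "real t \<le> real R * (real t - real k)"
      using R t by (simp add: field_simps)
    then show ?thesis using assms(3) by (simp flip: of_nat_mult of_nat_diff)
  qed
qed

lemma binomial_term_le_zone_weight:
  fixes p :: real
  assumes "0 \<le> p" "p \<le> 1" "2 \<le> R" "R * m \<le> t" "0 < t" "k \<le> t"
    and zone: "zone_of (1 / real R) (real k / real t) = z"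
    and small: "2 * zone_weight z p \<le> (1/4) ^ R"
  shows "p ^ k * (1 - p) ^ (t - k) \<le> 2 ^ m * 4 ^ (R * m) / 4 ^ t * zone_weight z p ^ m"
proof -
  define C :: real where "C = 4 ^ (R * m) / 4 ^ t"
  have upper: "p ^ k * (1 - p) ^ (t - k) \<le> C * p ^ m" if "p \<le> (1/4) ^ R" "z \<noteq> Low"
    using binomial_term_le_tail[of p R m t k] zone_of_fraction_bounds(1)[of R t k] zone that assms
    by (simp add: C_def)
  \<comment> \<open>the lower tail is the upper tail for \<open>1 - p\<close> and \<open>t - k\<close>\<close>
  have lower: "p ^ k * (1 - p) ^ (t - k) \<le> C * (1 - p) ^ m" if "1 - p \<le> (1/4) ^ R" "z \<noteq> High"
    using binomial_term_le_tail[of "1 - p" R m t "t - k"] zone_of_fraction_bounds(2)[of R t k] zone that assms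
    by (simp add: C_def mult.commute)
  obtain q where "0 \<le> q" "q \<le> 2 * zone_weight z p" "p ^ k * (1 - p) ^ (t - k) \<le> C * q ^ m"
  proof (cases z)
    case Low
    then show thesis using that[of "1 - p"] lower small assms(2) by (simp add: zone_weight_def)
  next
    case High
    then show thesis using that[of p] upper small assms(1) by (simp add: zone_weight_def)
  next
    case Mid
    show thesis
    proof (cases "p \<le> 1/2")
      case True
      then have "p * (2 * p) \<le> p * 1" using assms(1) by (intro mult_left_mono) auto
      then have "p \<le> 2 * (p * (1 - p))" by (simp add: algebra_simps)
      then show thesis using that[of p] upper small assms(1) Mid by (simp add: zone_weight_def)
    next
      case False
      then have "(1 - p) * 1 \<le> (1 - p) * (2 * p)" using assms(2) by (intro mult_left_mono) auto
      then have "1 - p \<le> 2 * (p * (1 - p))" by (simp add: algebra_simps)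
      then show thesis using that[of "1 - p"] lower small assms(2) Mid by (simp add: zone_weight_def)
    qed
  qed
  then have "p ^ k * (1 - p) ^ (t - k) \<le> C * (2 * zone_weight z p) ^ m"
    by (smt (verit, best) C_def divide_nonneg_nonneg mult_left_mono power_mono zero_le_power)
  then show ?thesis by (simp add: C_def power_mult_distrib mult_ac)
qed

lemma prob_binomial_zone_le:
  fixes p :: real
  assumes "0 \<le> p" "p \<le> 1" "2 \<le> R" "R * m \<le> t" "0 < t"
    and "2 * zone_weight z p \<le> (1/4) ^ R"
  shows "measure_pmf.prob (binomial_pmf t p) {k. zone_of (1 / real R) (real k / real t) = z}
           \<le> 2 ^ m * 4 ^ (R * m) / 2 ^ t * zone_weight z p ^ m"
proof -
  have "measure_pmf.prob (binomial_pmf t p) {k. zone_of (1 / real R) (real k / real t) = z}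
          \<le> 2 ^ t * (2 ^ m * 4 ^ (R * m) / 4 ^ t * zone_weight z p ^ m)"
    using assms binomial_term_le_zone_weight zone_weight_nonneg
    by (intro prob_binomial_le) auto
  also have "(4 :: real) ^ t = 2 ^ t * 2 ^ t"
    by (simp flip: power_mult_distrib)
  finally show ?thesis by simp
qed

section \<open>The empirical mean\<close>

lemma Xbar_pmf_component:
  "map_pmf (\<lambda>x. x i) (Xbar_pmf t p) = map_pmf (\<lambda>k. real k / real t) (binomial_pmf t (p i))"
  unfolding Xbar_pmf_def by (subst Pi_pmf_component) auto

lemma prob_Xbar_pmf_component:
  "measure_pmf.prob (Xbar_pmf t p) {x. x i \<in> B}
     = measure_pmf.prob (binomial_pmf t (p i)) {k. real k / real t \<in> B}"
  using arg_cong[OF Xbar_pmf_component[of i t p], of "\<lambda>P. measure_pmf.prob P B"]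
  by (simp add: vimage_def)

lemma prob_Xbar_pmf_box:
  "measure_pmf.prob (Xbar_pmf t p) {x. \<forall>i. x i \<in> B i}
     = (\<Prod>i\<in>UNIV. measure_pmf.prob (binomial_pmf t (p i)) {k. real k / real t \<in> B i})"
proof -
  have "{x. \<forall>i. x i \<in> B i} = Pi UNIV B" by auto
  then show ?thesis
    unfolding Xbar_pmf_def by (simp add: measure_Pi_pmf_Pi vimage_def)
qed

lemma set_pmf_Xbar_pmf_subset:
  assumes "p \<in> unit_cube"
  shows "set_pmf (Xbar_pmf t p) \<subseteq> unit_cube"
proof
  fix x assume x: "x \<in> set_pmf (Xbar_pmf t p)"
  have "0 \<le> x i \<and> x i \<le> 1" for i
  proof -
    have "x i \<in> set_pmf (map_pmf (\<lambda>x. x i) (Xbar_pmf t p))" using x by simp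
    then obtain k where "k \<in> set_pmf (binomial_pmf t (p i))" "x i = real k / real t"
      unfolding Xbar_pmf_component by auto
    moreover have "0 \<le> p i" "p i \<le> 1" using assms by (auto simp: unit_cube_def)
    ultimately show ?thesis by (auto simp: set_pmf_binomial_eq divide_le_eq_1 split: if_splits)
  qed
  then show "x \<in> unit_cube" by (simp add: unit_cube_def)
qed

lemma prob_Xbar_pmf_deviation:
  fixes p :: "'n::finite \<Rightarrow> real"
  assumes "p \<in> unit_cube" "0 < t" "0 \<le> a"
  shows "measure_pmf.prob (Xbar_pmf t p) {x. a \<le> linf_dist x p}
           \<le> 2 * CARD('n) * exp (- 2 * a\<^sup>2) ^ t"
proof -
  have "{x. a \<le> linf_dist x p} = (\<Union>i. {x. x i \<in> {y. a \<le> \<bar>y - p i\<bar>}})"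
    by (auto simp: not_less[symmetric] linf_dist_less_iff)
  then have "measure_pmf.prob (Xbar_pmf t p) {x. a \<le> linf_dist x p}
      \<le> (\<Sum>i\<in>UNIV. measure_pmf.prob (Xbar_pmf t p) {x. x i \<in> {y. a \<le> \<bar>y - p i\<bar>}})"
    by (simp add: measure_pmf.finite_measure_subadditive_finite)
  also have "\<dots> \<le> (\<Sum>i\<in>(UNIV :: 'n set). 2 * exp (- 2 * real t * a\<^sup>2))"
  proof (intro sum_mono)
    fix i
    have "p i \<in> {0..1}" using assms(1) by (auto simp: unit_cube_def)
    then show "measure_pmf.prob (Xbar_pmf t p) {x. x i \<in> {y. a \<le> \<bar>y - p i\<bar>}} \<le> 2 * exp (- 2 * real t * a\<^sup>2)"
      using binomial_distribution.prob_abs_ge'[OF binomial_distribution.intro assms(2,3)]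
        prob_Xbar_pmf_component[of t p i "{y. a \<le> \<bar>y - p i\<bar>}"]
      by simp
  qed
  also have "\<dots> = 2 * CARD('n) * exp (- 2 * a\<^sup>2) ^ t"
    by (simp flip: exp_of_nat_mult)
  finally show ?thesis .
qed

lemma prob_linf_nbhd_ge:
  assumes "p \<in> K"
  shows "1 - measure_pmf.prob (Xbar_pmf t p) {x. \<epsilon> \<le> linf_dist x p}
           \<le> measure_pmf.prob (Xbar_pmf t p) (linf_nbhd K \<epsilon>)"
proof -
  have "- linf_nbhd K \<epsilon> \<subseteq> {x. \<epsilon> \<le> linf_dist x p}"
    using assms by (auto simp: linf_nbhd_def not_less)
  then have "measure_pmf.prob (Xbar_pmf t p) (- linf_nbhd K \<epsilon>) \<le> measure_pmf.prob (Xbar_pmf t p) {x. \<epsilon> \<le> linf_dist x p}"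
    by (intro measure_pmf.finite_measure_mono) auto
  then show ?thesis
    using measure_pmf.prob_compl[of "linf_nbhd K \<epsilon>" "Xbar_pmf t p"] by (simp add: Compl_eq_Diff_UNIV)
qed

lemma prob_cond_pmf:
  assumes "0 < measure_pmf.prob P N"
  shows "measure_pmf.prob (cond_pmf P N) E = measure_pmf.prob P (N \<inter> E) / measure_pmf.prob P N"
proof -
  have "set_pmf P \<inter> N \<noteq> {}"
    using assms measure_Int_set_pmf[of P N] by (metis Int_commute measure_empty less_irrefl)
  then have "measure_pmf (cond_pmf P N) = uniform_measure (measure_pmf P) N"
    by (rule cond_pmf.rep_eq)
  moreover have "emeasure (measure_pmf P) N \<noteq> 0"
    using assms by (simp add: measure_pmf.emeasure_eq_measure)
  ultimately show ?thesis
    by (simp add: measure_pmf.emeasure_eq_measure)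
qed

lemma prob_Xbar_pmf_pattern_le:
  fixes p :: "'n::finite \<Rightarrow> real" and \<sigma> :: "'n \<Rightarrow> zone" and t R m :: nat
  defines "\<tau> \<equiv> 2 ^ m * 4 ^ (R * m) / 2 ^ t :: real" and "s \<equiv> (1/4) ^ R / 2 :: real"
  assumes "2 \<le> R" "R * m \<le> t" "0 < t" "p \<in> unit_cube" "\<tau> \<le> 1"
    and "zone_weight (\<sigma> j) (p j) < s"
  shows "measure_pmf.prob (Xbar_pmf t p) {x. \<forall>i. zone_of (1 / real R) (x i) = \<sigma> i}
           \<le> \<tau> * (\<Prod>i\<in>UNIV. zone_weight (\<sigma> i) (p i)) ^ m / s ^ (m * CARD('n))"
proof -
  define P where "P i = measure_pmf.prob (binomial_pmf t (p i)) {k. zone_of (1 / real R) (real k / real t) = \<sigma> i}" for i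
  define w where "w i = zone_weight (\<sigma> i) (p i)" for i
  have p01: "0 \<le> p i" "p i \<le> 1" for i using assms(6) by (auto simp: unit_cube_def)
  have "(1/4 :: real) ^ R \<le> 1" by (simp add: power_le_one)
  then have s: "0 < s" "s \<le> 1" unfolding s_def by auto
  have w0: "0 \<le> w i" for i unfolding w_def using p01 by (rule zone_weight_nonneg)
  have \<tau>0: "0 \<le> \<tau>" unfolding \<tau>_def by simp
  have small: "P i \<le> \<tau> * (w i / s) ^ m" if "w i \<le> s" for i
  proof -
    have "P i \<le> \<tau> * w i ^ m"
      unfolding P_def \<tau>_def w_def
      using that assms(3-5) p01 by (intro prob_binomial_zone_le) (auto simp: w_def s_def)
    also have "\<dots> \<le> \<tau> * (w i / s) ^ m"
      using s w0 \<tau>0 by (intro mult_left_mono power_mono) (auto simp: le_divide_eq mult_left_le)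
    finally show ?thesis .
  qed
  have P_le: "P i \<le> (if i = j then \<tau> else 1) * (w i / s) ^ m" for i
  proof (cases "w i \<le> s")
    case True
    then show ?thesis using small[of i] \<open>\<tau> \<le> 1\<close> w0 s
      by (smt (verit) divide_nonneg_nonneg mult_right_mono zero_le_power)
  next
    case False
    then have "1 \<le> (w i / s) ^ m" using s by (simp add: one_le_power)
    moreover have "i \<noteq> j" using False assms(8) by (auto simp: w_def)
    ultimately show ?thesis unfolding P_def by simp (meson measure_pmf.prob_le_1 order_trans)
  qed
  have "measure_pmf.prob (Xbar_pmf t p) {x. \<forall>i. zone_of (1 / real R) (x i) = \<sigma> i} = (\<Prod>i\<in>UNIV. P i)"
    unfolding prob_Xbar_pmf_box[where B = "\<lambda>i. {y. zone_of (1 / real R) y = \<sigma> i}", simplified] P_def ..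
  also have "\<dots> \<le> (\<Prod>i\<in>UNIV. (if i = j then \<tau> else 1) * (w i / s) ^ m)"
    using P_le by (intro prod_mono) (simp add: P_def)
  also have "\<dots> = \<tau> * (\<Prod>i\<in>UNIV. w i) ^ m / s ^ (m * CARD('n))"
    by (simp add: prod.distrib prod_dividef prod_power_distrib power_divide power_mult mult.commute)
  finally show ?thesis unfolding w_def .
qed

lemma exists_factor_less_of_prod_power_less:
  fixes w :: "'n::finite \<Rightarrow> real"
  assumes "0 < s" "(\<Prod>i\<in>UNIV. w i) ^ m < s ^ (m * CARD('n))"
  obtains j where "w j < s"
proof -
  have "\<exists>j. w j < s"
  proof (rule ccontr)
    assume "\<nexists>j. w j < s"
    then have "(\<Prod>i\<in>(UNIV :: 'n set). s) \<le> (\<Prod>i\<in>UNIV. w i)"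
      using assms(1) by (intro prod_mono) (auto simp: not_less)
    then have "s ^ (m * CARD('n)) \<le> (\<Prod>i\<in>UNIV. w i) ^ m"
      using assms(1) by (auto simp: power_mult mult.commute[of m] intro!: power_mono)
    then show False using assms(2) by linarith
  qed
  then show thesis using that by blast
qed

lemma sum_prob_Xbar_pmf_patterns_le:
  fixes p :: "'n::finite \<Rightarrow> real" and Pats :: "('n \<Rightarrow> zone) set" and t R m :: nat and b c :: real
  defines "\<tau> \<equiv> 2 ^ m * 4 ^ (R * m) / 2 ^ t :: real" and "s \<equiv> (1/4) ^ R / 2 :: real"
  assumes "2 \<le> R" "R * m \<le> t" "0 < t" "p \<in> unit_cube" "\<tau> \<le> 1" "0 < c" "0 \<le> b"
    and weight_bound: "\<And>\<sigma>. \<sigma> \<in> Pats \<Longrightarrow> c * (\<Prod>i\<in>UNIV. zone_weight (\<sigma> i) (p i)) ^ m \<le> b"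
    and "b < c * s ^ (m * CARD('n))"
  shows "(\<Sum>\<sigma>\<in>Pats. measure_pmf.prob (Xbar_pmf t p) {x. \<forall>i. zone_of (1 / real R) (x i) = \<sigma> i})
           \<le> CARD('n \<Rightarrow> zone) * (\<tau> * b) / (c * s ^ (m * CARD('n)))"
proof -
  have s: "0 < s" unfolding s_def by simp
  have "measure_pmf.prob (Xbar_pmf t p) {x. \<forall>i. zone_of (1 / real R) (x i) = \<sigma> i}
          \<le> \<tau> * b / (c * s ^ (m * CARD('n)))" if "\<sigma> \<in> Pats" for \<sigma>
  proof -
    have "c * (\<Prod>i\<in>UNIV. zone_weight (\<sigma> i) (p i)) ^ m < c * s ^ (m * CARD('n))"
      using weight_bound[OF that] \<open>b < _\<close> by linarith
    then have "(\<Prod>i\<in>UNIV. zone_weight (\<sigma> i) (p i)) ^ m < s ^ (m * CARD('n))"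
      using \<open>0 < c\<close> by simp
    then obtain j where "zone_weight (\<sigma> j) (p j) < s"
      using exists_factor_less_of_prod_power_less s by blast
    then have "measure_pmf.prob (Xbar_pmf t p) {x. \<forall>i. zone_of (1 / real R) (x i) = \<sigma> i}
        \<le> \<tau> * (\<Prod>i\<in>UNIV. zone_weight (\<sigma> i) (p i)) ^ m / s ^ (m * CARD('n))"
      using prob_Xbar_pmf_pattern_le assms(3-7) unfolding \<tau>_def s_def by blast
    also have "\<dots> \<le> \<tau> * (b / c) / s ^ (m * CARD('n))"
      using weight_bound[OF that] \<open>0 < c\<close> s unfolding \<tau>_def
      by (intro divide_right_mono mult_left_mono) (auto simp: field_simps)
    finally show ?thesis by (simp add: field_simps)
  qed
  then have "(\<Sum>\<sigma>\<in>Pats. measure_pmf.prob (Xbar_pmf t p) {x. \<forall>i. zone_of (1 / real R) (x i) = \<sigma> i})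
      \<le> card Pats * (\<tau> * b / (c * s ^ (m * CARD('n))))"
    by (rule sum_bounded_above)
  also have "\<dots> \<le> CARD('n \<Rightarrow> zone) * (\<tau> * b / (c * s ^ (m * CARD('n))))"
    using \<open>0 < c\<close> \<open>0 \<le> b\<close> s unfolding \<tau>_def
    by (intro mult_right_mono) (auto simp: card_mono)
  finally show ?thesis by simp
qed

lemma eventually_sample_size:
  fixes R m :: nat and a \<eta> :: real
  assumes "0 < a" "0 < \<eta>"
  shows "\<forall>\<^sub>F t in sequentially. R * m \<le> t \<and> 0 < t
      \<and> 2 * CARD('n::finite) * exp (- 2 * a\<^sup>2) ^ t \<le> min (1/2) (\<eta> / 4)
      \<and> 2 ^ m * 4 ^ (R * m) / 2 ^ t \<le> (1 :: real)
      \<and> CARD('n \<Rightarrow> zone) * (2 ^ m * 4 ^ (R * m) / 2 ^ t) \<le> \<eta> / 2"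
proof -
  have dev_lim: "(\<lambda>t. 2 * CARD('n) * exp (- 2 * a\<^sup>2) ^ t) \<longlonglongrightarrow> 0"
    using assms(1) by (intro tendsto_mult_right_zero LIMSEQ_realpow_zero) auto
  have dev: "\<forall>\<^sub>F t in sequentially. 2 * CARD('n) * exp (- 2 * a\<^sup>2) ^ t < min (1/2) (\<eta> / 4)"
    using assms(2) by (intro order_tendstoD(2)[OF dev_lim]) auto
  have \<tau>_lim: "(\<lambda>t. 2 ^ m * 4 ^ (R * m) / 2 ^ t :: real) \<longlonglongrightarrow> 0"
    by (rule LIMSEQ_divide_realpow_zero) simp
  have "\<forall>\<^sub>F t in sequentially. 2 ^ m * 4 ^ (R * m) / 2 ^ t < (1 :: real)"
    by (intro order_tendstoD(2)[OF \<tau>_lim]) auto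
  moreover have "\<forall>\<^sub>F t in sequentially. CARD('n \<Rightarrow> zone) * (2 ^ m * 4 ^ (R * m) / 2 ^ t :: real) < \<eta> / 2"
    using assms(2) by (intro order_tendstoD(2)[OF tendsto_mult_right_zero[OF \<tau>_lim]]) auto
  ultimately show ?thesis
    using eventually_ge_at_top[of "R * m"] eventually_gt_at_top[of 0] dev
    by eventually_elim auto
qed

section \<open>Nearest-point maps onto K\<close>

locale linf_projection =
  fixes K :: "('n::finite \<Rightarrow> real) set" and PiK :: "('n \<Rightarrow> real) \<Rightarrow> 'n \<Rightarrow> real"
  assumes K_subset: "K \<subseteq> unit_cube"
    and PiK_mem: "\<And>x. x \<in> unit_cube \<Longrightarrow> PiK x \<in> K"
    and PiK_nearest: "\<And>x q. x \<in> unit_cube \<Longrightarrow> q \<in> K \<Longrightarrow> linf_dist (PiK x) x \<le> linf_dist q x"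
begin

lemma linf_dist_PiK_less:
  assumes "x \<in> unit_cube" "x \<in> linf_nbhd K \<epsilon>"
  shows "linf_dist (PiK x) x < \<epsilon>"
proof -
  obtain q where "q \<in> K" "linf_dist x q < \<epsilon>"
    using assms(2) by (auto simp: linf_nbhd_def)
  then show ?thesis
    using PiK_nearest[OF assms(1)] linf_dist_commute[of x q] by fastforce
qed

lemma prob_PiK_far_le_deviation:
  assumes "p \<in> K" and far: "\<And>z. z \<in> K \<Longrightarrow> z \<in> S \<Longrightarrow> 2 * \<epsilon> \<le> linf_dist z p"
  shows "measure_pmf.prob (Xbar_pmf t p) (linf_nbhd K \<epsilon> \<inter> {y. PiK y \<in> S})
           \<le> measure_pmf.prob (Xbar_pmf t p) {x. \<epsilon> \<le> linf_dist x p}"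
proof -
  have "linf_nbhd K \<epsilon> \<inter> {y. PiK y \<in> S} \<inter> set_pmf (Xbar_pmf t p) \<subseteq> {x. \<epsilon> \<le> linf_dist x p}"
  proof
    fix x assume x: "x \<in> linf_nbhd K \<epsilon> \<inter> {y. PiK y \<in> S} \<inter> set_pmf (Xbar_pmf t p)"
    then have "x \<in> unit_cube"
      using set_pmf_Xbar_pmf_subset assms(1) K_subset by blast
    then have "2 * \<epsilon> \<le> linf_dist (PiK x) p" "linf_dist (PiK x) x < \<epsilon>"
      using x far PiK_mem linf_dist_PiK_less by auto
    then show "x \<in> {x. \<epsilon> \<le> linf_dist x p}"
      using linf_dist_triangle[of "PiK x" p x] by simp
  qed
  then show ?thesis
    by (subst measure_Int_set_pmf[symmetric]) (rule measure_pmf.finite_measure_mono; simp)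
qed

lemma prob_PiK_le_charged_patterns:
  fixes f :: "('n \<Rightarrow> real) \<Rightarrow> real"
  assumes gap: "\<And>\<sigma> z y. \<forall>q\<in>K \<inter> zone_face \<sigma>. f q \<le> 0 \<Longrightarrow> z \<in> K \<Longrightarrow> z \<in> S \<Longrightarrow> y \<in> zone_face \<sigma>
       \<Longrightarrow> e \<le> linf_dist z y"
    and "0 < \<gamma>" "\<gamma> + \<epsilon> \<le> e" "p \<in> unit_cube"
  shows "measure_pmf.prob (Xbar_pmf t p) (linf_nbhd K \<epsilon> \<inter> {y. PiK y \<in> S})
           \<le> (\<Sum>\<sigma>\<in>{\<sigma>. \<exists>q\<in>K \<inter> zone_face \<sigma>. 0 < f q}.
                 measure_pmf.prob (Xbar_pmf t p) {x. \<forall>i. zone_of \<gamma> (x i) = \<sigma> i})"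
proof -
  define pattern where "pattern \<sigma> = {x. \<forall>i. zone_of \<gamma> (x i) = \<sigma> i}" for \<sigma> :: "'n \<Rightarrow> zone"
  let ?charged = "{\<sigma>. \<exists>q\<in>K \<inter> zone_face \<sigma>. 0 < f q}"
  have "linf_nbhd K \<epsilon> \<inter> {y. PiK y \<in> S} \<inter> set_pmf (Xbar_pmf t p) \<subseteq> (\<Union>\<sigma>\<in>?charged. pattern \<sigma>)"
  proof
    fix x assume x: "x \<in> linf_nbhd K \<epsilon> \<inter> {y. PiK y \<in> S} \<inter> set_pmf (Xbar_pmf t p)"
    then have "x \<in> unit_cube"
      using set_pmf_Xbar_pmf_subset assms(4) by blast
    then obtain y where y: "y \<in> zone_face (\<lambda>i. zone_of \<gamma> (x i))" "linf_dist x y < \<gamma>"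
      using exists_zone_face_near \<open>0 < \<gamma>\<close> by blast
    have "(\<lambda>i. zone_of \<gamma> (x i)) \<in> ?charged"
    proof (rule ccontr)
      assume "(\<lambda>i. zone_of \<gamma> (x i)) \<notin> ?charged"
      then have "e \<le> linf_dist (PiK x) y"
        using gap[OF _ PiK_mem[OF \<open>x \<in> unit_cube\<close>] _ y(1)] x by (auto simp: not_less)
      moreover have "linf_dist (PiK x) x < \<epsilon>"
        using x \<open>x \<in> unit_cube\<close> linf_dist_PiK_less by blast
      ultimately show False
        using linf_dist_triangle[of "PiK x" y x] y(2) \<open>\<gamma> + \<epsilon> \<le> e\<close> by linarith
    qed
    then show "x \<in> (\<Union>\<sigma>\<in>?charged. pattern \<sigma>)"
      by (auto simp: pattern_def)
  qed
  then have "measure_pmf.prob (Xbar_pmf t p) (linf_nbhd K \<epsilon> \<inter> {y. PiK y \<in> S})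
      \<le> measure_pmf.prob (Xbar_pmf t p) (\<Union>\<sigma>\<in>?charged. pattern \<sigma>)"
    by (subst measure_Int_set_pmf[symmetric]) (rule measure_pmf.finite_measure_mono; simp)
  also have "\<dots> \<le> (\<Sum>\<sigma>\<in>?charged. measure_pmf.prob (Xbar_pmf t p) (pattern \<sigma>))"
    by (rule measure_pmf.finite_measure_subadditive_finite) auto
  finally show ?thesis unfolding pattern_def .
qed

lemma prob_Y_pmf_superlevel_le:
  fixes f :: "('n \<Rightarrow> real) \<Rightarrow> real" and t R m :: nat and c e \<delta> \<epsilon> :: real
  defines "\<tau> \<equiv> 2 ^ m * 4 ^ (R * m) / 2 ^ t :: real" and "\<eta> \<equiv> c * ((1/4) ^ R / 2) ^ (m * CARD('n))"
  assumes "p \<in> K" "0 \<le> f p" "0 < c"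
    and face_bound: "\<And>\<sigma>. \<exists>q\<in>K \<inter> zone_face \<sigma>. 0 < f q \<Longrightarrow>
       c * (\<Prod>i\<in>UNIV. zone_weight (\<sigma> i) (p i)) ^ m \<le> f p"
    and face_gap: "\<And>\<sigma> z y. \<forall>q\<in>K \<inter> zone_face \<sigma>. f q \<le> 0 \<Longrightarrow> z \<in> K \<Longrightarrow> 1/2 \<le> f z \<Longrightarrow>
       y \<in> zone_face \<sigma> \<Longrightarrow> e \<le> linf_dist z y"
    and level_gap: "\<And>z. z \<in> K \<Longrightarrow> 1/2 \<le> f z \<Longrightarrow> f p \<le> 2/7 \<Longrightarrow> \<delta> \<le> linf_dist z p"
    and "2 \<le> R" "0 < \<epsilon>" "2 * \<epsilon> \<le> \<delta>" "1 / real R + \<epsilon> \<le> e" "R * m \<le> t" "0 < t"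
    and "2 * CARD('n) * exp (- 2 * \<epsilon>\<^sup>2) ^ t \<le> min (1/2) (\<eta> / 4)"
    and "\<tau> \<le> 1" "real CARD('n \<Rightarrow> zone) * \<tau> \<le> \<eta> / 2"
  shows "measure_pmf.prob (Y_pmf t \<epsilon> K p) {y. 1/2 \<le> f (PiK y)} \<le> 7/2 * f p"
proof -
  define X where "X = Xbar_pmf t p"
  define N where "N = linf_nbhd K \<epsilon>"
  define E where "E = {y. 1/2 \<le> f (PiK y)}"
  have dev: "measure_pmf.prob X {x. \<epsilon> \<le> linf_dist x p} \<le> min (1/2) (\<eta> / 4)"
    using prob_Xbar_pmf_deviation[of p t \<epsilon>] \<open>p \<in> K\<close> K_subset \<open>0 < t\<close> \<open>0 < \<epsilon>\<close>
      \<open>2 * CARD('n) * exp (- 2 * \<epsilon>\<^sup>2) ^ t \<le> min (1/2) (\<eta> / 4)\<close>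
    unfolding X_def by fastforce
  have "1/2 \<le> measure_pmf.prob X N"
    using prob_linf_nbhd_ge[OF \<open>p \<in> K\<close>, of t \<epsilon>] dev unfolding X_def N_def by linarith
  then have "measure_pmf.prob (Y_pmf t \<epsilon> K p) E = measure_pmf.prob X (N \<inter> E) / measure_pmf.prob X N"
    unfolding Y_pmf_def X_def[symmetric] N_def[symmetric] by (intro prob_cond_pmf) linarith
  also have "\<dots> \<le> measure_pmf.prob X (N \<inter> E) / (1/2)"
    using \<open>1/2 \<le> measure_pmf.prob X N\<close> by (intro divide_left_mono) auto
  finally have Y_le: "measure_pmf.prob (Y_pmf t \<epsilon> K p) E \<le> 2 * measure_pmf.prob X (N \<inter> E)"
    by simp
  have "\<eta> > 0" using \<open>0 < c\<close> by (simp add: \<eta>_def)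
  consider "2/7 < f p" | "\<eta> \<le> f p" "f p \<le> 2/7" | "f p < \<eta>" by linarith
  then have "measure_pmf.prob (Y_pmf t \<epsilon> K p) E \<le> 7/2 * f p"
  proof cases
    case 1
    then show ?thesis using measure_pmf.prob_le_1[of "Y_pmf t \<epsilon> K p" E] by linarith
  next
    case 2
    have "measure_pmf.prob X (N \<inter> E) \<le> measure_pmf.prob X {x. \<epsilon> \<le> linf_dist x p}"
      using prob_PiK_far_le_deviation[OF \<open>p \<in> K\<close>, of "{z. 1/2 \<le> f z}" \<epsilon> t]
        level_gap 2 \<open>2 * \<epsilon> \<le> \<delta>\<close> by (force simp: X_def N_def E_def)
    then show ?thesis
      using Y_le dev 2 min.cobounded2[of "1/2" "\<eta> / 4"] \<open>0 \<le> f p\<close> by linarith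
  next
    case 3
    have "measure_pmf.prob X (N \<inter> E)
        \<le> (\<Sum>\<sigma>\<in>{\<sigma>. \<exists>q\<in>K \<inter> zone_face \<sigma>. 0 < f q}.
              measure_pmf.prob X {x. \<forall>i. zone_of (1 / real R) (x i) = \<sigma> i})"
      using prob_PiK_le_charged_patterns[of f "{z. 1/2 \<le> f z}" e "1 / real R" \<epsilon> p t]
        face_gap \<open>2 \<le> R\<close> \<open>1 / real R + \<epsilon> \<le> e\<close> \<open>p \<in> K\<close> K_subset
      by (auto simp: X_def N_def E_def)
    also have "\<dots> \<le> CARD('n \<Rightarrow> zone) * (\<tau> * f p) / \<eta>"
      unfolding X_def \<tau>_def \<eta>_def
      using \<open>2 \<le> R\<close> \<open>R * m \<le> t\<close> \<open>0 < t\<close> \<open>p \<in> K\<close> K_subset \<open>\<tau> \<le> 1\<close> \<open>0 < c\<close> \<open>0 \<le> f p\<close> face_bound 3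
      by (intro sum_prob_Xbar_pmf_patterns_le) (auto simp: \<tau>_def \<eta>_def)
    also have "\<dots> \<le> f p / 2"
      using \<open>real CARD('n \<Rightarrow> zone) * \<tau> \<le> \<eta> / 2\<close> \<open>0 < \<eta>\<close> \<open>0 \<le> f p\<close>
      by (simp add: field_simps) (metis mult_right_mono mult.commute mult.left_commute)
    finally show ?thesis using Y_le \<open>0 \<le> f p\<close> by linarith
  qed
  then show ?thesis by (simp add: E_def)
qed

end

theorem lemma8:
  fixes K :: "('n::finite \<Rightarrow> real) set"
    and f :: "('n \<Rightarrow> real) \<Rightarrow> real"
    and PiK :: "('n \<Rightarrow> real) \<Rightarrow> ('n \<Rightarrow> real)"
  assumes "K \<subseteq> unit_cube" and "compact K"
    and "continuous_on K f" and "\<forall>p\<in>K. 0 \<le> f p \<and> f p \<le> 1"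
    and "poly_bounded K f"
    and "\<forall>x\<in>unit_cube. PiK x \<in> K"
    and "\<forall>x\<in>unit_cube. \<forall>q\<in>K. linf_dist (PiK x) x \<le> linf_dist q x"
  shows "\<exists>\<epsilon>>0. \<exists>t0::nat. \<forall>t\<ge>t0. \<forall>p\<in>K.
           f p - 1/4 * measure_pmf.prob (Y_pmf t \<epsilon> K p) {y. f (PiK y) \<ge> 1/2} \<ge> f p / 8"
proof -
  interpret linf_projection K PiK
    using assms(1,6,7) by unfold_locales auto
  obtain c m where "0 < c" and face_bound: "\<And>\<sigma> p. \<exists>q\<in>K \<inter> zone_face \<sigma>. 0 < f q \<Longrightarrow> p \<in> K \<Longrightarrow>
      c * (\<Prod>i\<in>UNIV. zone_weight (\<sigma> i) (p i)) ^ m \<le> f p"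
    using poly_bounded_zone_weight[OF assms(5,1)] by blast
  obtain e where "0 < e" and face_gap: "\<And>\<sigma> z y. \<forall>q\<in>K \<inter> zone_face \<sigma>. f q \<le> 0 \<Longrightarrow> z \<in> K \<Longrightarrow>
      1/2 \<le> f z \<Longrightarrow> y \<in> zone_face \<sigma> \<Longrightarrow> e \<le> linf_dist z y"
    using exists_gap_to_null_faces[OF assms(2,3), of "1/2"] by auto
  obtain \<delta> where "0 < \<delta>" and level_gap: "\<And>z p. z \<in> K \<Longrightarrow> 1/2 \<le> f z \<Longrightarrow> p \<in> K \<Longrightarrow> f p \<le> 2/7 \<Longrightarrow>
      \<delta> \<le> linf_dist z p"
    using exists_level_gap[OF assms(2,3), of "2/7" "1/2"] by auto
  obtain N :: nat where "2 / e \<le> N"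
    using real_arch_simple by blast
  define R where "R = N + 2"
  define \<epsilon> where "\<epsilon> = min (e / 2) (\<delta> / 2)"
  define \<eta> where "\<eta> = c * ((1/4) ^ R / 2) ^ (m * CARD('n))"
  have "1 / real R \<le> e / 2"
    using \<open>2 / e \<le> N\<close> \<open>0 < e\<close> by (simp add: R_def field_simps)
  then have "2 \<le> R" "1 / real R + \<epsilon> \<le> e" "2 * \<epsilon> \<le> \<delta>"
    by (auto simp: R_def \<epsilon>_def)
  have "0 < \<epsilon>" "0 < \<eta>"
    using \<open>0 < e\<close> \<open>0 < \<delta>\<close> \<open>0 < c\<close> by (auto simp: \<epsilon>_def \<eta>_def)
  then obtain t0 where t0: "\<And>t. t0 \<le> t \<Longrightarrow> R * m \<le> t \<and> 0 < t
      \<and> 2 * CARD('n) * exp (- 2 * \<epsilon>\<^sup>2) ^ t \<le> min (1/2) (\<eta> / 4)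
      \<and> 2 ^ m * 4 ^ (R * m) / 2 ^ t \<le> (1 :: real)
      \<and> CARD('n \<Rightarrow> zone) * (2 ^ m * 4 ^ (R * m) / 2 ^ t) \<le> \<eta> / 2"
    using eventually_sample_size[where 'n = 'n, of \<epsilon> \<eta> R m]
    unfolding eventually_sequentially by blast
  show ?thesis
  proof (intro exI[of _ \<epsilon>] conjI \<open>0 < \<epsilon>\<close> exI[of _ t0] allI impI ballI)
    fix t p assume "t0 \<le> t" "p \<in> K"
    then have "measure_pmf.prob (Y_pmf t \<epsilon> K p) {y. 1/2 \<le> f (PiK y)} \<le> 7/2 * f p"
      using t0[OF \<open>t0 \<le> t\<close>] assms(4) \<open>0 < c\<close> face_bound face_gap level_gap \<open>0 < \<epsilon>\<close>
        \<open>2 \<le> R\<close> \<open>1 / real R + \<epsilon> \<le> e\<close> \<open>2 * \<epsilon> \<le> \<delta>\<close>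
      by (intro prob_Y_pmf_superlevel_le[where f = f and c = c and m = m and e = e and \<delta> = \<delta>
            and \<epsilon> = \<epsilon> and R = R and t = t]) (auto simp: \<eta>_def)
    then show "f p / 8 \<le> f p - 1/4 * measure_pmf.prob (Y_pmf t \<epsilon> K p) {y. 1/2 \<le> f (PiK y)}"
      by simp
  qed
qed

end
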